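(* Let $N, J \ge 1$ be integers and let $F_1,\dots,F_J:\mathbb{R}_+^N\to\mathbb{R}_+$ be upper semicontinuous, concave functions that are homogeneous of degree 1. Define $F:\mathbb{R}_+^N\to\mathbb{R}_+$ by $$F(x)=\max\Big\{\sum_{j=1}^J F_j(x_j): x_j\in\mathbb{R}_+^N \text{ for all } j,\ \sum_{j=1}^J x_j=x\Big\}.$$ Let $\Delta=\{x\in\mathbb{R}_+^N:\sum_{n=1}^N x_n=1\}$. Then $$\operatorname{hyp} F|_\Delta=\operatorname{co}\Big(\bigcup_{j=1}^J \operatorname{hyp} F_j|_\Delta\Big).$$
   Context: For a function $f:D\to\mathbb{R}$, its hypograph is $\operatorname{hyp} f=\{(x,y)\in D\times\mathbb{R}: y\le f(x)\}$; $f|_\Delta$ denotes the restriction to $\Delta$, and $\operatorname{co}A$ denotes the convex hull of a set $A$. Homogeneous of degree 1 means $F_j(\lambda x)=\lambda F_j(x)$ for all $\lambda\ge0$. *)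

theory Defs
  imports "HOL-Analysis.Analysis"
begin

definition orthant :: "(real ^ 'n) set" where
  "orthant = {x. \<forall>i. 0 \<le> x $ i}"

definition simplex_Delta :: "(real ^ 'n) set" where
  "simplex_Delta = {x \<in> orthant. (\<Sum>i\<in>UNIV. x $ i) = 1}"

definition usc_on :: "'a::topological_space set \<Rightarrow> ('a \<Rightarrow> real) \<Rightarrow> bool" where
  "usc_on S f \<longleftrightarrow> (\<forall>x\<in>S. \<forall>a. f x < a \<longrightarrow> (\<forall>\<^sub>F y in at x within S. f y < a))"

definition hyp_on :: "'a set \<Rightarrow> ('a \<Rightarrow> real) \<Rightarrow> ('a \<times> real) set" where
  "hyp_on D f = {(x, y). x \<in> D \<and> y \<le> f x}"

text \<open>The sup-convolution F(x) = max { sum_j F_j(x_j) : x_j in orthant, sum_j x_j = x }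
  (the maximum exists under the hypotheses; we write it as the supremum).\<close>
definition supconv :: "nat \<Rightarrow> (nat \<Rightarrow> real ^ 'n \<Rightarrow> real) \<Rightarrow> real ^ 'n \<Rightarrow> real" where
  "supconv J Fs x = Sup {(\<Sum>j<J. Fs j (xs j)) | xs.
       (\<forall>j<J. xs j \<in> orthant) \<and> (\<Sum>j<J. xs j) = x}"

end

theory Submission
  imports Defs
begin

text \<open>
  The sup-convolution F is concave, because the average of optimal allocations of two points is
  an allocation of their average; so hyp F|Delta is convex, and it contains every hyp F_j|Delta,
  since allocating all of x to the index j shows F_j x \<le> F x. Conversely, take x \<in> Delta with
  an optimal allocation x = sum_j x_j, and let t_j be the total mass of x_j, so that
  sum_j t_j = 1. By homogeneity (x, F x) = sum_j t_j (x_j / t_j, F_j (x_j / t_j)) is a convex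
  combination of points on the graphs of the F_j over Delta; lowering all of them by F x - y
  yields (x, y). Upper semicontinuity serves only to make the supremum defining F a maximum,
  attained on the compact set of allocations.
\<close>

lemma usc_onD_nhd:
  assumes "usc_on S f" "x \<in> S" "f x < a"
  shows "\<exists>T. open T \<and> x \<in> T \<and> (\<forall>y\<in>T \<inter> S. f y < a)"
proof -
  have "\<forall>\<^sub>F y in at x within S. f y < a"
    using assms unfolding usc_on_def by blast
  then obtain T where "open T" "x \<in> T" "\<forall>y\<in>T. y \<in> S \<longrightarrow> y \<noteq> x \<longrightarrow> f y < a"
    unfolding eventually_at_topological by blast
  with assms(3) show ?thesis
    by blast
qed

lemma usc_on_const: "usc_on S (\<lambda>x. c)"
  by (simp add: usc_on_def)

lemma usc_on_add:
  assumes "usc_on S f" "usc_on S g"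
  shows "usc_on S (\<lambda>x. f x + g x)"
  unfolding usc_on_def
proof (intro ballI allI impI)
  fix x a assume x: "x \<in> S" and lt: "f x + g x < a"
  define d where "d = (a - f x - g x) / 2"
  have "\<forall>\<^sub>F y in at x within S. f y < f x + d" "\<forall>\<^sub>F y in at x within S. g y < g x + d"
    using assms x lt unfolding usc_on_def d_def by auto
  moreover have "f x + g x + 2 * d = a"
    by (simp add: d_def field_simps)
  ultimately show "\<forall>\<^sub>F y in at x within S. f y + g y < a"
    by (elim eventually_rev_mp) (auto intro!: always_eventually)
qed

lemma usc_on_sum:
  assumes "finite I" "\<And>i. i \<in> I \<Longrightarrow> usc_on S (f i)"
  shows "usc_on S (\<lambda>x. \<Sum>i\<in>I. f i x)"
  using assms by (induction I rule: finite_induct) (auto intro: usc_on_const usc_on_add)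

lemma usc_on_compose:
  assumes "continuous_on T p" "p ` T \<subseteq> S" "usc_on S f"
  shows "usc_on T (\<lambda>x. f (p x))"
  unfolding usc_on_def
proof (intro ballI allI impI)
  fix x a assume x: "x \<in> T" and lt: "f (p x) < a"
  have "\<forall>\<^sub>F z in nhds (p x). z \<noteq> p x \<longrightarrow> z \<in> S \<longrightarrow> f z < a"
    using assms(2,3) x lt unfolding usc_on_def eventually_at_filter by blast
  moreover have "(p \<longlongrightarrow> p x) (at x within T)"
    using assms(1) x by (simp add: continuous_on_def)
  ultimately have "\<forall>\<^sub>F y in at x within T. p y \<noteq> p x \<longrightarrow> p y \<in> S \<longrightarrow> f (p y) < a"
    by (rule eventually_compose_filterlim)
  moreover have "\<forall>\<^sub>F y in at x within T. y \<in> T"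
    by (simp add: eventually_at_filter)
  ultimately show "\<forall>\<^sub>F y in at x within T. f (p y) < a"
    by eventually_elim (use assms(2) lt in auto)
qed

lemma usc_on_attains_max:
  assumes "compact K" "K \<noteq> {}" "usc_on K f"
  shows "\<exists>x\<in>K. \<forall>y\<in>K. f y \<le> f x"
proof (rule ccontr)
  assume "\<not> ?thesis"
  then have "\<forall>x\<in>K. \<exists>y\<in>K. f x < f y"
    by (auto simp: not_le)
  then obtain g where g: "\<And>x. x \<in> K \<Longrightarrow> g x \<in> K \<and> f x < f (g x)"
    by metis
  have "\<forall>x\<in>K. \<exists>U. open U \<and> x \<in> U \<and> (\<forall>y\<in>U \<inter> K. f y < f (g x))"
    using usc_onD_nhd[OF assms(3)] g by blast
  then obtain U where U: "\<And>x. x \<in> K \<Longrightarrow> open (U x) \<and> x \<in> U x \<and> (\<forall>y\<in>U x \<inter> K. f y < f (g x))"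
    by metis
  then have cover: "K \<subseteq> (\<Union>x\<in>K. U x)"
    by blast
  obtain C where C: "C \<subseteq> K" "finite C" "K \<subseteq> (\<Union>x\<in>C. U x)"
    using compactE_image[OF assms(1) _ cover] U by blast
  then have "C \<noteq> {}"
    using assms(2) by auto
  then have "Max ((\<lambda>d. f (g d)) ` C) \<in> (\<lambda>d. f (g d)) ` C"
    using C(2) by (intro Max_in) auto
  then obtain c where c: "c \<in> C" "f (g c) = Max ((\<lambda>d. f (g d)) ` C)"
    by (metis imageE)
  obtain d where d: "d \<in> C" "g c \<in> U d"
    using C g[of c] c(1) by blast
  then have "f (g c) < f (g d)"
    using U C g[of c] c(1) by blast
  moreover have "f (g d) \<le> f (g c)"
    using c C(2) d(1) by simp
  ultimately show False
    by simp
qed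

lemma closed_orthant: "closed orthant"
  using closed_interval_right_cart[of 0] by (simp add: orthant_def)

lemma convex_orthant: "convex orthant"
  unfolding convex_def orthant_def by auto

definition mass :: "real ^ 'n \<Rightarrow> real" where
  "mass x = (\<Sum>i\<in>UNIV. x $ i)"

lemma mass_sum: "mass (\<Sum>j\<in>I. xs j) = (\<Sum>j\<in>I. mass (xs j))"
  unfolding mass_def by (simp add: sum_component sum.swap[of _ I])

lemma mass_scaleR: "mass (c *\<^sub>R x) = c * mass x"
  by (simp add: mass_def sum_distrib_left)

lemma mass_pos:
  assumes "x \<in> orthant" "x \<noteq> 0"
  shows "mass x > 0"
proof -
  have "mass x \<ge> 0"
    using assms(1) by (simp add: mass_def orthant_def sum_nonneg)
  moreover have "mass x \<noteq> 0"
  proof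
    assume "mass x = 0"
    then have "\<forall>i. x $ i = 0"
      using assms(1) by (simp add: mass_def orthant_def sum_nonneg_eq_0_iff)
    with assms(2) show False
      by (simp add: vec_eq_iff)
  qed
  ultimately show ?thesis
    by simp
qed

lemma simplex_Delta_iff: "x \<in> simplex_Delta \<longleftrightarrow> x \<in> orthant \<and> mass x = 1"
  by (simp add: simplex_Delta_def mass_def)

lemma convex_simplex_Delta: "convex simplex_Delta"
  unfolding convex_def simplex_Delta_def orthant_def
  by (auto simp: sum.distrib simp flip: sum_distrib_left)

lemma convex_hyp_on:
  assumes "concave_on D f"
  shows "convex (hyp_on D f)"
proof -
  have "hyp_on D f = (\<lambda>p. (fst p, - snd p)) -` epigraph D (\<lambda>x. - f x)"
    by (auto simp: hyp_on_def epigraph_def)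
  moreover have "linear (\<lambda>p :: 'a \<times> real. (fst p, - snd p))"
    by (auto simp: linear_iff)
  moreover have "convex (epigraph D (\<lambda>x. - f x))"
    using assms by (simp add: convex_epigraph concave_on_def)
  ultimately show ?thesis
    by (metis convex_linear_vimage)
qed

lemma concave_on_subset: "concave_on T f \<Longrightarrow> S \<subseteq> T \<Longrightarrow> convex S \<Longrightarrow> concave_on S f"
  unfolding concave_on_def by (rule convex_on_subset)

lemma homogeneous_normalized_mem_hyp_on:
  assumes hom: "\<And>l z. z \<in> orthant \<Longrightarrow> l \<ge> 0 \<Longrightarrow> f (l *\<^sub>R z) = l * f z"
    and "z \<in> orthant" "z \<noteq> 0" "y \<le> f z / mass z"
  shows "(inverse (mass z) *\<^sub>R z, y) \<in> hyp_on simplex_Delta f"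
proof -
  have pos: "mass z > 0"
    using mass_pos[OF assms(2,3)] .
  then have "inverse (mass z) *\<^sub>R z \<in> simplex_Delta"
    using assms(2) by (simp add: simplex_Delta_iff mass_scaleR orthant_def)
  moreover have "f (inverse (mass z) *\<^sub>R z) = f z / mass z"
    using hom[OF assms(2), of "inverse (mass z)"] pos by (simp add: field_simps)
  ultimately show ?thesis
    using assms(4) by (simp add: hyp_on_def)
qed

definition allocations :: "nat \<Rightarrow> real ^ 'n \<Rightarrow> (nat \<Rightarrow> real ^ 'n) set" where
  "allocations J x = {xs. (\<forall>j<J. xs j \<in> orthant) \<and> (\<Sum>j<J. xs j) = x}"

lemma supconv_eq_Sup_allocations:
  "supconv J Fs x = Sup ((\<lambda>xs. \<Sum>j<J. Fs j (xs j)) ` allocations J x)"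
  unfolding supconv_def allocations_def by (auto intro!: arg_cong[where f = Sup])

lemma closed_allocations: "closed (allocations J x)"
proof -
  have "allocations J x = (\<Inter>j<J. (\<lambda>xs. xs j) -` orthant) \<inter> {xs. (\<Sum>j<J. xs j) = x}"
    unfolding allocations_def by auto
  then show ?thesis
    by (simp add: closed_INT closed_Int closed_vimage closed_orthant closed_Collect_eq continuous_on_sum)
qed

lemma allocation_in_cbox:
  assumes "xs \<in> allocations J x" "j < J"
  shows "xs j \<in> cbox 0 x"
  unfolding mem_box_cart
proof
  fix i
  have "xs j $ i \<le> (\<Sum>k<J. xs k $ i)"
    by (rule member_le_sum) (use assms in \<open>auto simp: allocations_def orthant_def\<close>)
  also have "\<dots> = x $ i"
    using assms by (auto simp: allocations_def)
  finally show "0 $ i \<le> xs j $ i \<and> xs j $ i \<le> x $ i"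
    using assms by (auto simp: allocations_def orthant_def)
qed

lemma compact_PiE_UNIV:
  fixes S :: "'i \<Rightarrow> 'b::topological_space set"
  assumes "\<And>i. compact (S i)"
  shows "compact (PiE UNIV S)"
proof -
  have "compactin (product_topology (\<lambda>i. euclidean) UNIV) (PiE UNIV S)"
    using assms by (simp add: compactin_PiE)
  then show ?thesis
    by (simp add: euclidean_product_topology)
qed

lemma supconv_attained:
  fixes Fs :: "nat \<Rightarrow> real ^ 'n \<Rightarrow> real"
  assumes "J \<ge> 1" "\<And>j. j < J \<Longrightarrow> usc_on orthant (Fs j)" "x \<in> orthant"
  obtains xs where "xs \<in> allocations J x" "supconv J Fs x = (\<Sum>j<J. Fs j (xs j))"
    "\<And>ys. ys \<in> allocations J x \<Longrightarrow> (\<Sum>j<J. Fs j (ys j)) \<le> supconv J Fs x"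
proof -
  define \<Phi> where "\<Phi> xs = (\<Sum>j<J. Fs j (xs j))" for xs :: "nat \<Rightarrow> real ^ 'n"
  define truncate where "truncate xs j = (if j < J then xs j else 0)" for xs :: "nat \<Rightarrow> real ^ 'n" and j
  \<comment> \<open>Allocations are unconstrained beyond index J; pinning those entries to 0 makes the
    search space compact.\<close>
  define K where "K = PiE UNIV (\<lambda>j. if j < J then cbox 0 x else {0}) \<inter> allocations J x"
  have "compact K"
    unfolding K_def by (intro compact_Int_closed compact_PiE_UNIV closed_allocations) auto
  have truncate: "truncate ys \<in> K" "\<Phi> (truncate ys) = \<Phi> ys" if "ys \<in> allocations J x" for ys
    using that allocation_in_cbox[OF that]
    by (auto simp: K_def truncate_def \<Phi>_def allocations_def PiE_iff)
  have "(\<lambda>j. if j = 0 then x else 0) \<in> allocations J x"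
    using assms(1,3) by (auto simp: allocations_def orthant_def)
  then have "K \<noteq> {}"
    using truncate by blast
  have "usc_on K (\<lambda>xs. Fs j (xs j))" if "j < J" for j
  proof (rule usc_on_compose[OF _ _ assms(2)[OF that]])
    show "continuous_on K (\<lambda>xs. xs j)"
      by (rule continuous_on_subset[OF continuous_on_product_coordinates]) simp
    show "(\<lambda>xs. xs j) ` K \<subseteq> orthant"
      using that by (auto simp: K_def allocations_def)
  qed
  then have "usc_on K \<Phi>"
    unfolding \<Phi>_def by (intro usc_on_sum) auto
  then obtain xs where xs: "xs \<in> K" "\<And>ys. ys \<in> K \<Longrightarrow> \<Phi> ys \<le> \<Phi> xs"
    using usc_on_attains_max[OF \<open>compact K\<close> \<open>K \<noteq> {}\<close>] by blast
  then have xs_alloc: "xs \<in> allocations J x"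
    by (simp add: K_def)
  have max: "\<Phi> ys \<le> \<Phi> xs" if "ys \<in> allocations J x" for ys
    using xs(2) truncate[OF that] by metis
  then have "supconv J Fs x = \<Phi> xs"
    unfolding supconv_eq_Sup_allocations \<Phi>_def[symmetric]
    by (intro cSup_eq_maximum) (use xs_alloc in auto)
  with xs_alloc max show thesis
    using that unfolding \<Phi>_def by metis
qed

lemma sum_le_supconv:
  fixes Fs :: "nat \<Rightarrow> real ^ 'n \<Rightarrow> real"
  assumes "xs \<in> allocations J x" "J \<ge> 1" "\<And>j. j < J \<Longrightarrow> usc_on orthant (Fs j)"
  shows "(\<Sum>j<J. Fs j (xs j)) \<le> supconv J Fs x"
proof -
  have "0 \<le> xs 0 $ i" "xs 0 $ i \<le> x $ i" for i
    using allocation_in_cbox[OF assms(1), of 0] assms(2) by (auto simp: mem_box_cart)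
  then have "x \<in> orthant"
    unfolding orthant_def by (blast intro: order_trans)
  have "\<forall>ys\<in>allocations J x. (\<Sum>j<J. Fs j (ys j)) \<le> supconv J Fs x"
    using supconv_attained[where Fs = Fs, OF assms(2,3) \<open>x \<in> orthant\<close>] by metis
  with assms(1) show ?thesis
    by blast
qed

lemma concave_on_supconv:
  fixes Fs :: "nat \<Rightarrow> real ^ 'n \<Rightarrow> real"
  assumes "J \<ge> 1" "\<And>j. j < J \<Longrightarrow> usc_on orthant (Fs j)"
    and concave: "\<And>j. j < J \<Longrightarrow> concave_on orthant (Fs j)"
  shows "concave_on orthant (supconv J Fs)"
  unfolding concave_on_iff
proof (intro conjI convex_orthant ballI allI impI)
  fix x x' :: "real ^ 'n" and u v :: real
  assume x: "x \<in> orthant" and x': "x' \<in> orthant" and uv: "u \<ge> 0" "v \<ge> 0" "u + v = 1"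
  obtain xs where xs: "xs \<in> allocations J x" "supconv J Fs x = (\<Sum>j<J. Fs j (xs j))"
    using supconv_attained[where Fs = Fs, OF assms(1,2) x] by blast
  obtain xs' where xs': "xs' \<in> allocations J x'" "supconv J Fs x' = (\<Sum>j<J. Fs j (xs' j))"
    using supconv_attained[where Fs = Fs, OF assms(1,2) x'] by blast
  define zs where "zs j = u *\<^sub>R xs j + v *\<^sub>R xs' j" for j
  have "zs j \<in> orthant" if "j < J" for j
    using convex_orthant xs(1) xs'(1) uv that unfolding convex_def allocations_def zs_def by blast
  moreover have "(\<Sum>j<J. zs j) = u *\<^sub>R x + v *\<^sub>R x'"
    using xs(1) xs'(1) by (simp add: allocations_def zs_def sum.distrib flip: scaleR_sum_right)
  ultimately have "zs \<in> allocations J (u *\<^sub>R x + v *\<^sub>R x')"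
    by (simp add: allocations_def)
  then have "(\<Sum>j<J. Fs j (zs j)) \<le> supconv J Fs (u *\<^sub>R x + v *\<^sub>R x')"
    by (rule sum_le_supconv) (use assms(1,2) in auto)
  moreover have "u * Fs j (xs j) + v * Fs j (xs' j) \<le> Fs j (zs j)" if "j < J" for j
    using concave[OF that] xs(1) xs'(1) that uv unfolding concave_on_iff zs_def allocations_def by blast
  then have "u * supconv J Fs x + v * supconv J Fs x' \<le> (\<Sum>j<J. Fs j (zs j))"
    unfolding xs(2) xs'(2) sum_distrib_left sum.distrib[symmetric] by (intro sum_mono) simp
  ultimately show "u * supconv J Fs x + v * supconv J Fs x' \<le> supconv J Fs (u *\<^sub>R x + v *\<^sub>R x')"
    by linarith
qed

lemma summand_le_supconv:
  fixes Fs :: "nat \<Rightarrow> real ^ 'n \<Rightarrow> real"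
  assumes "\<And>j. j < J \<Longrightarrow> usc_on orthant (Fs j)" "\<And>k. k < J \<Longrightarrow> Fs k 0 = 0"
    and "j < J" "x \<in> orthant"
  shows "Fs j x \<le> supconv J Fs x"
proof -
  define xs where "xs k = (if k = j then x else 0)" for k
  have "xs \<in> allocations J x"
    using assms(3,4) by (auto simp: allocations_def xs_def orthant_def)
  then have "(\<Sum>k<J. Fs k (xs k)) \<le> supconv J Fs x"
    by (rule sum_le_supconv) (use assms(1,3) in auto)
  moreover have "(\<Sum>k<J. Fs k (xs k)) = (\<Sum>k<J. if k = j then Fs j x else 0)"
    by (rule sum.cong) (auto simp: xs_def assms(2))
  ultimately show ?thesis
    using assms(3) by simp
qed

lemma hyp_on_supconv_subset_convex_hull:
  fixes Fs :: "nat \<Rightarrow> real ^ 'n \<Rightarrow> real"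
  assumes "J \<ge> 1" "\<And>j. j < J \<Longrightarrow> usc_on orthant (Fs j)"
    and hom: "\<And>j l z. j < J \<Longrightarrow> z \<in> orthant \<Longrightarrow> l \<ge> 0 \<Longrightarrow> Fs j (l *\<^sub>R z) = l * Fs j z"
  shows "hyp_on simplex_Delta (supconv J Fs) \<subseteq> convex hull (\<Union>j<J. hyp_on simplex_Delta (Fs j))"
proof
  fix p assume "p \<in> hyp_on simplex_Delta (supconv J Fs)"
  then obtain x y where p: "p = (x, y)" and x: "x \<in> simplex_Delta" and y: "y \<le> supconv J Fs x"
    by (auto simp: hyp_on_def)
  then have "x \<in> orthant"
    by (simp add: simplex_Delta_iff)
  then obtain xs where xs: "xs \<in> allocations J x" "supconv J Fs x = (\<Sum>j<J. Fs j (xs j))"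
    using supconv_attained[where Fs = Fs, OF assms(1,2)] by blast
  define P where "P = {j. j < J \<and> xs j \<noteq> 0}"
  define c where "c = supconv J Fs x - y"
  define q where "q j = (inverse (mass (xs j)) *\<^sub>R xs j, Fs j (xs j) / mass (xs j) - c)" for j
  have pos: "mass (xs j) > 0" if "j \<in> P" for j
    using that xs(1) by (intro mass_pos) (auto simp: P_def allocations_def)
  have q: "q j \<in> (\<Union>j<J. hyp_on simplex_Delta (Fs j))" if "j \<in> P" for j
  proof -
    have j: "j < J" "xs j \<in> orthant" "xs j \<noteq> 0"
      using that xs(1) by (auto simp: P_def allocations_def)
    have "c \<ge> 0"
      using y by (simp add: c_def)
    then have "q j \<in> hyp_on simplex_Delta (Fs j)"
      unfolding q_def using j hom by (intro homogeneous_normalized_mem_hyp_on) auto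
    with j(1) show ?thesis
      by blast
  qed
  have sum_P: "(\<Sum>j\<in>P. g j) = (\<Sum>j<J. g j)" if "\<And>j. j < J \<Longrightarrow> xs j = 0 \<Longrightarrow> g j = 0"
    for g :: "nat \<Rightarrow> 'a::comm_monoid_add"
    by (rule sum.mono_neutral_left) (auto simp: P_def that)
  have "(\<Sum>j\<in>P. mass (xs j)) = (\<Sum>j<J. mass (xs j))"
    by (rule sum_P) (simp add: mass_def)
  also have "\<dots> = mass x"
    using xs(1) by (simp add: allocations_def flip: mass_sum)
  also have "\<dots> = 1"
    using x by (simp add: simplex_Delta_iff)
  finally have weights: "(\<Sum>j\<in>P. mass (xs j)) = 1" .
  have "(\<Sum>j\<in>P. mass (xs j) *\<^sub>R q j) = (\<Sum>j\<in>P. (xs j, Fs j (xs j)) - mass (xs j) *\<^sub>R (0, c))"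
  proof (rule sum.cong)
    fix j assume "j \<in> P"
    then show "mass (xs j) *\<^sub>R q j = (xs j, Fs j (xs j)) - mass (xs j) *\<^sub>R (0, c)"
      using pos[of j] by (simp add: q_def algebra_simps)
  qed simp
  also have "\<dots> = (\<Sum>j\<in>P. (xs j, Fs j (xs j))) - (\<Sum>j\<in>P. mass (xs j)) *\<^sub>R (0, c)"
    by (simp only: sum_subtractf scaleR_sum_left)
  also have "(\<Sum>j\<in>P. (xs j, Fs j (xs j))) = (\<Sum>j<J. (xs j, Fs j (xs j)))"
    by (rule sum_P) (use hom[of _ 0 0] in \<open>simp add: orthant_def zero_prod_def\<close>)
  also have "(\<Sum>j<J. (xs j, Fs j (xs j))) - (\<Sum>j\<in>P. mass (xs j)) *\<^sub>R (0, c) = p"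
    using xs p by (simp add: weights prod_eq_iff fst_sum snd_sum c_def allocations_def)
  finally have "p = (\<Sum>j\<in>P. mass (xs j) *\<^sub>R q j)" ..
  moreover have "finite P"
    by (simp add: P_def)
  then have "(\<Sum>j\<in>P. mass (xs j) *\<^sub>R q j) \<in> convex hull (\<Union>j<J. hyp_on simplex_Delta (Fs j))"
    using q pos by (intro convex_sum[OF _ convex_convex_hull weights]) (auto intro: hull_inc less_imp_le)
  ultimately show "p \<in> convex hull (\<Union>j<J. hyp_on simplex_Delta (Fs j))"
    by simp
qed

theorem theorem3:
  fixes J :: nat and Fs :: "nat \<Rightarrow> real ^ 'n \<Rightarrow> real"
  assumes "J \<ge> 1"
    and "\<And>j x. j < J \<Longrightarrow> x \<in> orthant \<Longrightarrow> 0 \<le> Fs j x"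
    and "\<And>j. j < J \<Longrightarrow> usc_on orthant (Fs j)"
    and "\<And>j. j < J \<Longrightarrow> concave_on orthant (Fs j)"
    and "\<And>j l x. j < J \<Longrightarrow> x \<in> orthant \<Longrightarrow> l \<ge> 0 \<Longrightarrow> Fs j (l *\<^sub>R x) = l * Fs j x"
  shows "hyp_on simplex_Delta (supconv J Fs)
           = convex hull (\<Union>j<J. hyp_on simplex_Delta (Fs j))"
proof -
  have Delta_orthant: "simplex_Delta \<subseteq> orthant"
    by (auto simp: simplex_Delta_def)
  have zero: "Fs j 0 = 0" if "j < J" for j
    using assms(5)[OF that, of 0 0] by (simp add: orthant_def)
  have "Fs j x \<le> supconv J Fs x" if "j < J" "x \<in> simplex_Delta" for j x
    by (rule summand_le_supconv) (use assms(3) zero that Delta_orthant in auto)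
  then have pieces: "(\<Union>j<J. hyp_on simplex_Delta (Fs j)) \<subseteq> hyp_on simplex_Delta (supconv J Fs)"
    unfolding hyp_on_def by (auto intro: order_trans)
  have "concave_on orthant (supconv J Fs)"
    by (rule concave_on_supconv) (use assms(1,3,4) in auto)
  then have "concave_on simplex_Delta (supconv J Fs)"
    using Delta_orthant convex_simplex_Delta by (rule concave_on_subset)
  then have "convex (hyp_on simplex_Delta (supconv J Fs))"
    by (rule convex_hyp_on)
  with pieces have "convex hull (\<Union>j<J. hyp_on simplex_Delta (Fs j)) \<subseteq> hyp_on simplex_Delta (supconv J Fs)"
    by (rule hull_minimal)
  moreover have "hyp_on simplex_Delta (supconv J Fs) \<subseteq> convex hull (\<Union>j<J. hyp_on simplex_Delta (Fs j))"
    by (rule hyp_on_supconv_subset_convex_hull) (use assms(1,3,5) in auto)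
  ultimately show ?thesis
    by (rule antisym[rotated])
qed

end
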